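(* Let $t(z),d(z)\in\mathbb{C}[[z]]$ with $t^2-4d$ having a simple zero at $z=0$, let $\tilde X=\operatorname{Spf}\mathbb{C}[[\tilde z]]$ be the smooth spectral curve $\xi^2-t\xi+d=0$, with coordinate $\tilde z=\sqrt{t^2-4d}$ and canonical $1$-form $\mu=\xi\,dz|_{\tilde X}$. Let $a(\tilde z,\lambda)=\sum_{i\ge0}a_i(\tilde z)\lambda^i\in\mathbb{C}((\tilde z))[[\lambda]]$ with $a(\tilde z,0)=\mu(d\tilde z)^{-1}$. Let $Y$ be the set of $r(\tilde z,\lambda)\in\mathbb{C}((\tilde z))[[\lambda]]$ such that $r(\tilde z,0)\in\mathbb{C}[[\tilde z]]^\times$ and $a'=a+\lambda r^{-1}\frac{dr}{d\tilde z}$ satisfies $a'\in\tilde z^{-1}\mathbb{C}[[\tilde z,\lambda]]$ and $\operatorname{res}_{\tilde z=0}a'=-\lambda/2$; the group $\mathbb{C}[[\tilde z,\lambda]]^\times$ acts on $Y$ by multiplication. Then $Y$ is either empty or a single $\mathbb{C}[[\tilde z,\lambda]]^\times$-orbit, and $Y$ is non-empty if and only if $a_1(\tilde z)\in\tilde z^{-1}\mathbb{C}[[\tilde z]]$ and $\operatorname{res}_{\tilde z=0}a(\tilde z,\lambda)=-\lambda/2$.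
   Context: Residues of series in $\mathbb{C}((\tilde z))[[\lambda]]$ are taken coefficientwise in $\lambda$ (coefficient of $\tilde z^{-1}$). *)

theory Defs
  imports "HOL-Computational_Algebra.Formal_Laurent_Series"
begin

text \<open>Series in C((zt))[[lambda]] are modelled as complex fls fps:
  a power series in lambda whose coefficients are Laurent series in zt.\<close>

type_synonym lser = "complex fls fps"

definition zt_deriv :: "lser \<Rightarrow> lser" where
  "zt_deriv r = Abs_fps (\<lambda>i. fls_deriv (fps_nth r i))"

definition zt_res :: "lser \<Rightarrow> complex fps" where
  "zt_res a = Abs_fps (\<lambda>i. fls_residue (fps_nth a i))"

definition in_pow :: "complex fls \<Rightarrow> bool" where
  "in_pow f \<longleftrightarrow> f = 0 \<or> fls_subdegree f \<ge> 0"

definition in_pole1 :: "complex fls \<Rightarrow> bool" where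
  "in_pole1 f \<longleftrightarrow> f = 0 \<or> fls_subdegree f \<ge> -1"

definition in_PS2 :: "lser \<Rightarrow> bool" where
  "in_PS2 u \<longleftrightarrow> (\<forall>i. in_pow (fps_nth u i))"

definition units_PS2 :: "lser set" where
  "units_PS2 = {u. in_PS2 u \<and> fls_nth (fps_nth u 0) 0 \<noteq> 0}"

definition in_pole1_PS2 :: "lser \<Rightarrow> bool" where
  "in_pole1_PS2 u \<longleftrightarrow> (\<forall>i. in_pole1 (fps_nth u i))"

definition unit_pow :: "complex fls \<Rightarrow> bool" where
  "unit_pow f \<longleftrightarrow> f \<noteq> 0 \<and> fls_subdegree f = 0"

text \<open>Spectral curve xi^2 - t xi + d = 0 with coordinate zt = sqrt(t^2-4d) = 2 xi - t.
  Writing f = t^2 - 4d (simple zero at 0), the curve is parametrised by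
  z(zt) = f^{-1}(zt^2) (compositional inverse) and xi(zt) = (t(z(zt)) + zt)/2.\<close>
definition spec_z :: "complex fps \<Rightarrow> complex fps \<Rightarrow> complex fps" where
  "spec_z t d = fps_inv (t^2 - 4 * d) oo (fps_X ^ 2)"

definition spec_xi :: "complex fps \<Rightarrow> complex fps \<Rightarrow> complex fps" where
  "spec_xi t d = fps_const (1/2) * ((t oo spec_z t d) + fps_X)"

text \<open>mu (d zt)^{-1} = xi * dz/dzt, with mu = xi dz restricted to the curve.\<close>
definition mu_over_dzt :: "complex fps \<Rightarrow> complex fps \<Rightarrow> complex fps" where
  "mu_over_dzt t d = spec_xi t d * fps_deriv (spec_z t d)"

definition Yset :: "lser \<Rightarrow> lser set" where
  "Yset a = {r. unit_pow (fps_nth r 0) \<and>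
     (let a' = a + fps_X * inverse r * zt_deriv r in
        in_pole1_PS2 a' \<and> zt_res a' = - fps_const (1/2) * fps_X)}"

end

theory Submission
  imports Defs
begin

(* The logarithmic derivative L r = r^-1 * dr/dzt turns products into sums, and
   a' = a + lambda * L r.  The lambda^0-coefficient of L r is holomorphic because r(zt,0) is a
   unit, and its higher coefficients have no residue, so res a' = res a.  If r, s both lie in Y,
   then u = s/r has L u with at most simple poles and no residues, i.e. L u is holomorphic,
   and this forces u to be a unit of C[[zt,lambda]].  Conversely, if a_1 has at most a simple
   pole, r = exp s works, where s_0 = 0 and s_n (n >= 1) is a Laurent antiderivative of
   -a_(n+1): then L r = ds/dzt cancels the poles of order >= 2 of every a_(n+1). *)

unbundle fps_syntax

lemma in_pow_iff: "in_pow f \<longleftrightarrow> (\<forall>k<0. f $$ k = 0)"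
  unfolding in_pow_def using fls_subdegree_ge0I nth_less_subdegree_zero by fastforce

lemma in_pole1_iff: "in_pole1 f \<longleftrightarrow> (\<forall>k< -1. f $$ k = 0)"
  unfolding in_pole1_def using fls_subdegree_geI nth_less_subdegree_zero by fastforce

lemma unit_pow_iff: "unit_pow f \<longleftrightarrow> in_pow f \<and> f $$ 0 \<noteq> 0"
  unfolding unit_pow_def in_pow_def
  by (metis fls_subdegree_leI nth_fls_subdegree_nonzero order_antisym fls_nonzeroI)

lemma in_pow_diff: "in_pow f \<Longrightarrow> in_pow g \<Longrightarrow> in_pow (f - g)"
  by (simp add: in_pow_iff)

lemma in_pow_mult: "in_pow f \<Longrightarrow> in_pow g \<Longrightarrow> in_pow (f * g)"
  unfolding in_pow_def by (cases "f = 0"; cases "g = 0") auto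

lemma in_pow_sum: "(\<And>i. i \<in> A \<Longrightarrow> in_pow (f i)) \<Longrightarrow> in_pow (\<Sum>i\<in>A. f i)"
  by (simp add: in_pow_iff fls_nth_sum)

lemma in_pow_fls_deriv: "in_pow f \<Longrightarrow> in_pow (fls_deriv f)"
  unfolding in_pow_iff
proof (intro allI impI)
  fix k :: int assume "\<forall>k<0. f $$ k = 0" "k < 0"
  then show "fls_deriv f $$ k = 0" by (cases "k = -1") auto
qed

lemma in_pow_if_in_pow_fls_deriv: "in_pow (fls_deriv f) \<Longrightarrow> in_pow f"
  unfolding in_pow_iff
proof (intro allI impI)
  fix k :: int assume deriv: "\<forall>k<0. fls_deriv f $$ k = 0" and k: "k < 0"
  have "of_int k * f $$ k = 0" using deriv[rule_format, of "k - 1"] k by simp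
  then show "f $$ k = 0" using k by simp
qed

lemma in_pow_imp_in_pole1: "in_pow f \<Longrightarrow> in_pole1 f"
  by (simp add: in_pow_iff in_pole1_iff)

lemma in_pole1_add: "in_pole1 f \<Longrightarrow> in_pole1 g \<Longrightarrow> in_pole1 (f + g)"
  by (simp add: in_pole1_iff)

lemma in_pole1_diff: "in_pole1 f \<Longrightarrow> in_pole1 g \<Longrightarrow> in_pole1 (f - g)"
  by (simp add: in_pole1_iff)

lemma in_pole1_residue_eq_0_imp_in_pow: "in_pole1 f \<Longrightarrow> fls_residue f = 0 \<Longrightarrow> in_pow f"
  unfolding in_pole1_iff in_pow_iff fls_residue_def
proof (intro allI impI)
  fix k :: int assume "\<forall>k< -1. f $$ k = 0" "f $$ -1 = 0" "k < 0"
  then show "f $$ k = 0" by (cases "k = -1") auto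
qed

lemma in_pow_imp_residue_eq_0: "in_pow f \<Longrightarrow> fls_residue f = 0"
  by (simp add: in_pow_iff)

lemma in_pole1_diff_fls_deriv_fls_integral: "in_pole1 (f - fls_deriv (fls_integral f))"
  unfolding in_pole1_iff
proof (intro allI impI)
  fix k :: int assume "k < -1"
  then have "(of_int (k + 1) :: complex) \<noteq> 0" unfolding of_int_eq_0_iff by simp
  then show "(f - fls_deriv (fls_integral f)) $$ k = 0" using \<open>k < -1\<close> by simp
qed

lemma unit_pow_mult: "unit_pow f \<Longrightarrow> unit_pow g \<Longrightarrow> unit_pow (f * g)"
  unfolding unit_pow_def by auto

lemma unit_pow_inverse: "unit_pow f \<Longrightarrow> unit_pow (inverse f)"
  unfolding unit_pow_def by simp

lemma zt_deriv_nth [simp]: "zt_deriv r $ n = fls_deriv (r $ n)"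
  by (simp add: zt_deriv_def)

lemma zt_res_nth [simp]: "zt_res r $ n = fls_residue (r $ n)"
  by (simp add: zt_res_def)

lemma zt_deriv_one [simp]: "zt_deriv 1 = 0"
  by (rule fps_ext) (simp add: fps_one_nth)

lemma zt_deriv_mult [simp]: "zt_deriv (f * g) = zt_deriv f * g + f * zt_deriv g"
proof (rule fps_ext)
  fix n
  have "zt_deriv (f * g) $ n
      = (\<Sum>i=0..n. fls_deriv (f $ i) * g $ (n - i) + f $ i * fls_deriv (g $ (n - i)))"
    by (simp add: fps_mult_nth fls_deriv_sum add.commute)
  then show "zt_deriv (f * g) $ n = (zt_deriv f * g + f * zt_deriv g) $ n"
    by (simp add: fps_mult_nth sum.distrib)
qed

lemma zt_deriv_inverse:
  assumes "r $ 0 \<noteq> 0"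
  shows "zt_deriv (inverse r) = - zt_deriv r * (inverse r)\<^sup>2"
proof -
  have r_inv: "r * inverse r = 1" using assms by (rule inverse_mult_eq_1')
  then have "0 = zt_deriv (r * inverse r) * inverse r" by simp
  also have "\<dots> = zt_deriv r * (inverse r)\<^sup>2 + (r * inverse r) * zt_deriv (inverse r)"
    by (simp add: algebra_simps power2_eq_square)
  finally show ?thesis using r_inv by (simp add: eq_neg_iff_add_eq_0 add.commute)
qed

lemma fps_deriv_zt_deriv: "fps_deriv (zt_deriv f) = zt_deriv (fps_deriv f)"
  by (rule fps_ext) (simp del: of_nat_Suc)

lemma zt_res_add [simp]: "zt_res (f + g) = zt_res f + zt_res g"
  by (rule fps_ext) simp

lemma zt_res_fps_X_mult [simp]: "zt_res (fps_X * f) = fps_X * zt_res f"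
  by (rule fps_ext) simp

definition zt_logderiv :: "lser \<Rightarrow> lser" where
  "zt_logderiv r = inverse r * zt_deriv r"

lemma zt_logderiv_mult:
  assumes "u $ 0 \<noteq> 0" "r $ 0 \<noteq> 0"
  shows "zt_logderiv (u * r) = zt_logderiv u + zt_logderiv r"
proof -
  have u_inv: "inverse u * u = 1" and r_inv: "inverse r * r = 1"
    using assms by (auto intro: inverse_mult_eq_1)
  have "zt_logderiv (u * r) = inverse u * inverse r * (zt_deriv u * r + u * zt_deriv r)"
    by (simp add: zt_logderiv_def fps_inverse_mult)
  also have "\<dots> = (inverse u * zt_deriv u) * (inverse r * r)
      + (inverse r * zt_deriv r) * (inverse u * u)"
    by (simp add: distrib_left mult_ac)
  also have "\<dots> = zt_logderiv u + zt_logderiv r"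
    unfolding u_inv r_inv zt_logderiv_def by simp
  finally show ?thesis .
qed

lemma in_pow_zt_logderiv_nth_0:
  assumes "unit_pow (r $ 0)"
  shows "in_pow (zt_logderiv r $ 0)"
proof -
  have "zt_logderiv r $ 0 = inverse (r $ 0) * fls_deriv (r $ 0)" by (simp add: zt_logderiv_def)
  moreover have "in_pow (inverse (r $ 0))" using unit_pow_inverse[OF assms] unit_pow_iff by blast
  moreover have "in_pow (fls_deriv (r $ 0))" using assms unit_pow_iff in_pow_fls_deriv by blast
  ultimately show ?thesis using in_pow_mult by simp
qed

lemma fps_deriv_zt_logderiv:
  assumes "r $ 0 \<noteq> 0"
  shows "fps_deriv (zt_logderiv r) = zt_deriv (inverse r * fps_deriv r)"
proof -
  have "fps_deriv (zt_logderiv r)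
      = - fps_deriv r * (inverse r)\<^sup>2 * zt_deriv r + inverse r * zt_deriv (fps_deriv r)"
    using assms by (simp add: zt_logderiv_def fps_inverse_deriv fps_deriv_zt_deriv)
  also have "\<dots> = zt_deriv (inverse r * fps_deriv r)"
    using assms by (simp add: zt_deriv_inverse mult_ac)
  finally show ?thesis .
qed

(* The lambda-derivative of L r is the exact zt-derivative of r^-1 * dr/dlambda, so the
   coefficients of lambda^n, n >= 1, have no residue. *)
lemma zt_res_zt_logderiv:
  assumes "unit_pow (r $ 0)"
  shows "zt_res (zt_logderiv r) = 0"
proof (rule fps_ext)
  fix n show "zt_res (zt_logderiv r) $ n = 0 $ n"
  proof (cases n)
    case 0
    then show ?thesis using in_pow_imp_residue_eq_0[OF in_pow_zt_logderiv_nth_0[OF assms]] by simp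
  next
    case (Suc m)
    have "r $ 0 \<noteq> 0" using assms unit_pow_def by auto
    then have "fps_deriv (zt_logderiv r) $ m = zt_deriv (inverse r * fps_deriv r) $ m"
      by (simp only: fps_deriv_zt_logderiv[OF \<open>r $ 0 \<noteq> 0\<close>])
    then have "of_nat (m + 1) * zt_logderiv r $ (m + 1) = fls_deriv ((inverse r * fps_deriv r) $ m)"
      by (simp only: fps_deriv_nth zt_deriv_nth)
    then have "fls_residue (of_nat (m + 1) * zt_logderiv r $ (m + 1)) = 0"
      by (simp only: fls_residue_deriv)
    then show ?thesis using Suc by (simp del: of_nat_Suc)
  qed
qed

lemma fps_deriv_eq_mult_imp_eq_0:
  fixes F G :: "'a::{idom,ring_char_0} fps"
  assumes ode: "fps_deriv F = G * F" and "F $ 0 = 0"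
  shows "F = 0"
proof -
  have "F $ n = 0" for n
  proof (induction n rule: less_induct)
    case (less n)
    show ?case
    proof (cases n)
      case (Suc m)
      have "of_nat (Suc m) * F $ Suc m = (G * F) $ m" by (metis ode fps_deriv_nth Suc_eq_plus1)
      also have "\<dots> = 0" unfolding fps_mult_nth by (intro sum.neutral) (simp add: less.IH Suc)
      finally show ?thesis using Suc by (simp del: of_nat_Suc)
    qed (use \<open>F $ 0 = 0\<close> in simp)
  qed
  then show ?thesis by (simp add: fps_ext)
qed

lemma zt_logderiv_fps_exp_compose:
  assumes s0: "s $ 0 = 0"
  shows "zt_logderiv (fps_exp 1 oo s) = zt_deriv s"
proof -
  define E where "E = fps_exp 1 oo s"
  have E0: "E $ 0 = 1" by (simp add: E_def)
  have E_ode: "fps_deriv E = fps_deriv s * E"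
    using fps_compose_deriv[OF s0, of "fps_exp 1"] by (simp add: E_def mult.commute)
  define F where "F = zt_deriv E - zt_deriv s * E"
  have "fps_deriv F = fps_deriv s * F"
    unfolding F_def by (simp add: fps_deriv_zt_deriv E_ode algebra_simps)
  moreover have "F $ 0 = 0" by (simp add: F_def E0 s0)
  ultimately have "F = 0" by (rule fps_deriv_eq_mult_imp_eq_0)
  then have dE: "zt_deriv E = zt_deriv s * E" by (simp add: F_def)
  have "zt_logderiv E = (inverse E * E) * zt_deriv s"
    unfolding zt_logderiv_def dE by (simp only: mult_ac)
  also have "inverse E * E = 1" using E0 by (intro inverse_mult_eq_1) simp
  finally show ?thesis by (simp add: E_def)
qed

lemma units_PS2_iff: "u \<in> units_PS2 \<longleftrightarrow> in_PS2 u \<and> unit_pow (u $ 0)"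
  unfolding units_PS2_def in_PS2_def using unit_pow_iff by auto

lemma in_PS2_mult: "in_PS2 f \<Longrightarrow> in_PS2 g \<Longrightarrow> in_PS2 (f * g)"
  unfolding in_PS2_def by (simp add: fps_mult_nth in_pow_sum in_pow_mult)

lemma in_PS2_zt_deriv: "in_PS2 f \<Longrightarrow> in_PS2 (zt_deriv f)"
  unfolding in_PS2_def by (simp add: in_pow_fls_deriv)

lemma in_PS2_inverse:
  assumes u: "in_PS2 u" and u0: "unit_pow (u $ 0)"
  shows "in_PS2 (inverse u)"
  unfolding in_PS2_def
proof
  fix n show "in_pow (inverse u $ n)"
  proof (induction n rule: less_induct)
    case (less n)
    define S where "S = (\<Sum>i=1..n. u $ i * inverse u $ (n - i))"
    have "u $ 0 \<noteq> 0" using u0 unit_pow_def by auto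
    then have "1 $ n = u $ 0 * inverse u $ n + S"
      unfolding S_def
      by (simp add: inverse_mult_eq_1'[symmetric] fps_mult_nth sum.atLeast_Suc_atMost)
    then have "inverse u $ n = inverse (u $ 0) * (1 $ n - S)"
      using \<open>u $ 0 \<noteq> 0\<close> by (simp add: field_simps)
    moreover have "in_pow S" unfolding S_def
      using u less by (intro in_pow_sum in_pow_mult) (auto simp: in_PS2_def)
    moreover have "in_pow (1 $ n)" by (simp add: fps_one_nth in_pow_def)
    moreover have "in_pow (inverse (u $ 0))" using unit_pow_inverse[OF u0] unit_pow_iff by blast
    ultimately show ?case by (simp add: in_pow_mult in_pow_diff)
  qed
qed

lemma in_PS2_zt_logderiv: "u \<in> units_PS2 \<Longrightarrow> in_PS2 (zt_logderiv u)"
  unfolding units_PS2_iff zt_logderiv_def by (simp add: in_PS2_mult in_PS2_inverse in_PS2_zt_deriv)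

lemma in_PS2_if_zt_logderiv:
  assumes u0: "unit_pow (u $ 0)" and c: "in_PS2 (zt_logderiv u)"
  shows "in_PS2 u"
  unfolding in_PS2_def
proof
  fix n show "in_pow (u $ n)"
  proof (induction n rule: less_induct)
    case (less n)
    show ?case
    proof (cases n)
      case 0
      then show ?thesis using u0 unit_pow_iff by blast
    next
      case (Suc m)
      (* For q = u_n / u_0, the product q' u_0 only involves u_0, ..., u_(n-1). *)
      have nz: "u $ 0 \<noteq> 0" using u0 unit_pow_def by auto
      define S where "S = (\<Sum>i=0..m. u $ i * zt_logderiv u $ (n - i))"
      define q where "q = u $ n / u $ 0"
      have un: "u $ n = q * u $ 0" unfolding q_def using nz by simp
      have "u * zt_logderiv u = zt_deriv u"
        unfolding zt_logderiv_def using nz by (metis inverse_mult_eq_1' mult.assoc mult_1)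
      then have "fls_deriv (u $ n) = (\<Sum>i=0..n. u $ i * zt_logderiv u $ (n - i))"
        by (metis fps_mult_nth zt_deriv_nth)
      also have "\<dots> = S + u $ n * zt_logderiv u $ 0" unfolding S_def Suc by simp
      also have "u $ n * zt_logderiv u $ 0 = q * fls_deriv (u $ 0)"
        using nz by (simp add: un zt_logderiv_def)
      finally have "fls_deriv q * u $ 0 = S" unfolding un by simp
      then have "fls_deriv q = S * inverse (u $ 0)" using nz by (simp add: field_simps)
      moreover have "in_pow S" unfolding S_def
        using c less Suc by (intro in_pow_sum in_pow_mult) (auto simp: in_PS2_def)
      moreover have "in_pow (inverse (u $ 0))" using unit_pow_inverse[OF u0] unit_pow_iff by blast
      ultimately have "in_pow q" by (metis in_pow_mult in_pow_if_in_pow_fls_deriv)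
      then show ?thesis unfolding un using u0 unit_pow_iff in_pow_mult by blast
    qed
  qed
qed

lemma in_pole1_PS2_add: "in_pole1_PS2 f \<Longrightarrow> in_pole1_PS2 g \<Longrightarrow> in_pole1_PS2 (f + g)"
  unfolding in_pole1_PS2_def by (simp add: in_pole1_add)

lemma in_pole1_PS2_diff: "in_pole1_PS2 f \<Longrightarrow> in_pole1_PS2 g \<Longrightarrow> in_pole1_PS2 (f - g)"
  unfolding in_pole1_PS2_def by (simp add: in_pole1_diff)

lemma in_PS2_iff: "in_PS2 f \<longleftrightarrow> in_pole1_PS2 (fps_X * f) \<and> zt_res f = 0"
proof -
  have "in_pole1_PS2 (fps_X * f) \<longleftrightarrow> (\<forall>n. in_pole1 (f $ n))"
    unfolding in_pole1_PS2_def by (metis diff_Suc_1 fps_X_mult_nth in_pole1_def nat.distinct(1))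
  then show ?thesis unfolding in_PS2_def
    by (metis fps_zero_nth in_pole1_residue_eq_0_imp_in_pow in_pow_imp_in_pole1
        in_pow_imp_residue_eq_0 fps_ext zt_res_nth)
qed

lemma Yset_iff:
  "r \<in> Yset a \<longleftrightarrow> unit_pow (r $ 0) \<and> in_pole1_PS2 (a + fps_X * zt_logderiv r)
     \<and> zt_res a = - fps_const (1/2) * fps_X"
proof (cases "unit_pow (r $ 0)")
  case True
  then have "zt_res (a + fps_X * zt_logderiv r) = zt_res a" by (simp add: zt_res_zt_logderiv)
  with True show ?thesis unfolding Yset_def zt_logderiv_def Let_def by (simp add: mult.assoc)
qed (simp add: Yset_def)

lemma Yset_eq_orbit:
  assumes r: "r \<in> Yset a"
  shows "Yset a = {u * r | u. u \<in> units_PS2}"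
proof -
  have r0: "unit_pow (r $ 0)" using r Yset_iff by blast
  then have r_nz: "r $ 0 \<noteq> 0" by (simp add: unit_pow_def)
  show ?thesis
  proof (intro equalityI subsetI)
    fix s assume s: "s \<in> Yset a"
    define u where "u = s * inverse r"
    have us: "u * r = s" unfolding u_def using r_nz by (simp add: mult.assoc inverse_mult_eq_1)
    have u0: "unit_pow (u $ 0)"
      unfolding u_def using s r0 by (simp add: Yset_iff unit_pow_mult unit_pow_inverse)
    then have "u $ 0 \<noteq> 0" by (simp add: unit_pow_def)
    then have "zt_logderiv s = zt_logderiv u + zt_logderiv r"
      unfolding us[symmetric] using r_nz by (rule zt_logderiv_mult)
    then have "fps_X * zt_logderiv u
        = (a + fps_X * zt_logderiv s) - (a + fps_X * zt_logderiv r)"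
      by (simp add: algebra_simps)
    then have "in_pole1_PS2 (fps_X * zt_logderiv u)"
      using r s Yset_iff in_pole1_PS2_diff by metis
    then have "in_PS2 (zt_logderiv u)" using in_PS2_iff zt_res_zt_logderiv[OF u0] by blast
    then have "u \<in> units_PS2" using in_PS2_if_zt_logderiv u0 units_PS2_iff by blast
    with us show "s \<in> {u * r | u. u \<in> units_PS2}" by blast
  next
    fix s assume "s \<in> {u * r | u. u \<in> units_PS2}"
    then obtain u where u: "u \<in> units_PS2" and s: "s = u * r" by blast
    then have u0: "unit_pow (u $ 0)" by (simp add: units_PS2_iff)
    then have "u $ 0 \<noteq> 0" by (simp add: unit_pow_def)
    then have "zt_logderiv s = zt_logderiv u + zt_logderiv r"
      unfolding s using r_nz by (rule zt_logderiv_mult)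
    then have "a + fps_X * zt_logderiv s
        = (a + fps_X * zt_logderiv r) + fps_X * zt_logderiv u"
      by (simp add: algebra_simps)
    moreover have "in_pole1_PS2 (fps_X * zt_logderiv u)"
      using in_PS2_zt_logderiv[OF u] in_PS2_iff by blast
    ultimately have "in_pole1_PS2 (a + fps_X * zt_logderiv s)"
      using r Yset_iff in_pole1_PS2_add by metis
    moreover have "unit_pow (s $ 0)" using u0 r0 s by (simp add: unit_pow_mult)
    ultimately show "s \<in> Yset a" using r Yset_iff by blast
  qed
qed

lemma exists_in_pole1_PS2_add_zt_logderiv:
  assumes "in_pole1 (a $ 0)" and "in_pole1 (a $ 1)"
  shows "\<exists>r. unit_pow (r $ 0) \<and> in_pole1_PS2 (a + fps_X * zt_logderiv r)"
proof -
  define s where "s = Abs_fps (\<lambda>n. if n = 0 then 0 else - fls_integral (a $ Suc n))"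
  define r where "r = fps_exp 1 oo s"
  have "zt_logderiv r = zt_deriv s"
    unfolding r_def by (rule zt_logderiv_fps_exp_compose) (simp add: s_def)
  moreover have "in_pole1 ((a + fps_X * zt_deriv s) $ n)" for n
  proof (cases n)
    case (Suc m)
    then show ?thesis
      using assms(2) in_pole1_diff_fls_deriv_fls_integral[of "a $ n"]
      by (cases m) (simp_all add: s_def)
  qed (simp add: assms(1))
  moreover have "unit_pow (r $ 0)" by (simp add: r_def unit_pow_def)
  ultimately show ?thesis unfolding in_pole1_PS2_def by metis
qed

lemma Yset_nonempty_iff:
  assumes "in_pow (a $ 0)"
  shows "Yset a \<noteq> {} \<longleftrightarrow> in_pole1 (a $ 1) \<and> zt_res a = - fps_const (1/2) * fps_X"
proof
  assume "Yset a \<noteq> {}"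
  then obtain r where r: "r \<in> Yset a" by blast
  then have "in_pole1 ((a + fps_X * zt_logderiv r) $ 1)"
    unfolding Yset_iff in_pole1_PS2_def by blast
  then have "in_pole1 (a $ 1 + zt_logderiv r $ 0)" by simp
  moreover have "in_pole1 (zt_logderiv r $ 0)"
    using r in_pow_zt_logderiv_nth_0 in_pow_imp_in_pole1 Yset_iff by blast
  ultimately have "in_pole1 (a $ 1)" using in_pole1_diff by fastforce
  with r show "in_pole1 (a $ 1) \<and> zt_res a = - fps_const (1/2) * fps_X" by (simp add: Yset_iff)
next
  assume "in_pole1 (a $ 1) \<and> zt_res a = - fps_const (1/2) * fps_X"
  with assms show "Yset a \<noteq> {}"
    using exists_in_pole1_PS2_add_zt_logderiv in_pow_imp_in_pole1 Yset_iff by blast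
qed

theorem lemma4p8:
  fixes t d :: "complex fps" and a :: "complex fls fps"
  assumes "fps_nth (t^2 - 4 * d) 0 = 0" and "fps_nth (t^2 - 4 * d) 1 \<noteq> 0"
    and "fps_nth a 0 = fps_to_fls (mu_over_dzt t d)"
  shows "(Yset a = {} \<or> (\<exists>r \<in> Yset a. Yset a = {u * r | u. u \<in> units_PS2}))
         \<and> (Yset a \<noteq> {} \<longleftrightarrow>
              (in_pole1 (fps_nth a 1) \<and> zt_res a = - fps_const (1/2) * fps_X))"
proof -
  (* Only the holomorphy of a(zt,0) = mu/dzt enters. *)
  have "in_pow (a $ 0)" using assms(3) by (simp add: in_pow_iff)
  then show ?thesis using Yset_eq_orbit Yset_nonempty_iff by blast
qed

end
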